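(* For $a,b\in\mathbb{Z}$, writing $\Sigma_{(c,d)}$ for the set of finite sums $\sum f_{(a',b')}E_{(a',b')}$ over $(a',b')\preceq(c,d)$ with all $f_{(a',b')}\in q^{-\frac12}\mathbb{Z}[q^{-\frac12}]$, we have: (1) $q^{\frac12a}E_{(a,b)}X_0-E_{(a,b-1)}\in\Sigma_{(a+1,b-1)}$; (2) $q^{\frac12b}X_3E_{(a,b)}-E_{(a-1,b)}\in\Sigma_{(a-1,b+4)}$; (3) $q^{\frac12b}E_{(a,b)}X_1-E_{(a+1,b)}\in\Sigma_{(a+1,b+4)}$; (4) if $b>0$, $q^{-\frac12a}X_4E_{(a,b)}-E_{(a,b-1)}\in\Sigma_{(a-1,b-1)}$; (5) if $a>0$ and $b\le0$, $q^{-\frac12(a-b)}X_4E_{(a,b)}-E_{(a-1,b-1)}\in\Sigma_{(a-1,b+3)}$; (6) if $a\le0$ and $b\le0$, $q^{-\frac12(a-b)}X_4E_{(a,b)}-E_{(a-1,b-1)}\in\Sigma_{(a,b)}$.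
   Context: Let $\mathcal{T}$ be the quantum torus over $\mathbb{Z}[q^{\pm\frac12}]$ generated by $X_1^{\pm1},X_2^{\pm1}$ with $X_1X_2=qX_2X_1$, with skew field of fractions $\mathcal{F}$. Define $X_k\in\mathcal{F}$ ($k\in\mathbb{Z}$) by $X_{k-1}X_{k+1}=q^{\frac12}X_k+1$ for $k$ odd and $X_{k-1}X_{k+1}=q^2X_k^4+1$ for $k$ even; $\mathcal{A}_q(1,4)$ is the $\mathbb{Z}[q^{\pm\frac12}]$-subalgebra of $\mathcal{F}$ generated by all $X_k$. For $x\in\mathbb{Z}$, $[x]_+=\max(x,0)$. Standard monomials: $E_{(a,b)}=q^{-\frac12ab}X_3^{[-a]_+}X_1^{[a]_+}X_2^{[b]_+}X_0^{[-b]_+}$ for $(a,b)\in\mathbb{Z}^2$. Partial order on $\mathbb{Z}^2$: $(a',b')\preceq(a,b)$ iff $[-a']_+\le[-a]_+$ and $[-b']_+\le[-b]_+$. *)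

theory Defs
  imports "HOL-Library.Poly_Mapping"
begin

text \<open>Quantum torus T over Z[v,v^-1], v = q^(1/2), generated by X1, X2 with
  X1 X2 = q X2 X1 = v^2 X2 X1.  An element is a finitely supported map
  (n,a,b) to its integer coefficient at the normally ordered monomial
  v^n X1^a X2^b.  Since X2^b X1^c = v^(-2bc) X1^c X2^b, one has
  (v^n X1^a X2^b)(v^m X1^c X2^d) = v^(n+m-2bc) X1^(a+c) X2^(b+d).\<close>

type_synonym qt = "(int \<times> int \<times> int) \<Rightarrow>\<^sub>0 int"

definition mulkey :: "int \<times> int \<times> int \<Rightarrow> int \<times> int \<times> int \<Rightarrow> int \<times> int \<times> int" where
  "mulkey k l = (case k of (n, a, b) \<Rightarrow> case l of (m, c, d) \<Rightarrow>
      (n + m - 2 * b * c, a + c, b + d))"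

text \<open>Noncommutative multiplication of the quantum torus (NOT the poly_mapping times).\<close>
definition qmul :: "qt \<Rightarrow> qt \<Rightarrow> qt" where
  "qmul p r = (\<Sum>k\<in>Poly_Mapping.keys p. \<Sum>l\<in>Poly_Mapping.keys r. Poly_Mapping.single (mulkey k l) (Poly_Mapping.lookup p k * Poly_Mapping.lookup r l))"

definition mon :: "int \<Rightarrow> int \<Rightarrow> int \<Rightarrow> qt" where
  "mon n a b = Poly_Mapping.single (n, a, b) 1"

definition qone :: qt where "qone = mon 0 0 0"

fun qpow :: "qt \<Rightarrow> nat \<Rightarrow> qt" where
  "qpow x 0 = qone"
| "qpow x (Suc k) = qmul x (qpow x k)"

definition X1 :: qt where "X1 = mon 0 1 0"
definition X2 :: qt where "X2 = mon 0 0 1"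

text \<open>Cluster variables via the exchange relations X_{k-1} X_{k+1} = ...
  (k = 1: q^(1/2) X1 + 1; k = 2: q^2 X2^4 + 1; k = 3: q^(1/2) X3 + 1).
  They lie in T, where the relevant left/right factors are invertible, so they are
  uniquely determined inside T.\<close>
definition X0 :: qt where "X0 = (THE x. qmul x X2 = qmul (mon 1 0 0) X1 + qone)"
definition X3 :: qt where "X3 = (THE x. qmul X1 x = qmul (mon 4 0 0) (qpow X2 4) + qone)"
definition X4 :: qt where "X4 = (THE x. qmul X2 x = qmul (mon 1 0 0) X3 + qone)"

definition pos :: "int \<Rightarrow> nat" where "pos x = nat (max x 0)"

definition E :: "int \<times> int \<Rightarrow> qt" where
  "E p = (case p of (a, b) \<Rightarrow>
     qmul (mon (- a * b) 0 0)
       (qmul (qpow X3 (pos (- a)))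
         (qmul (qpow X1 (pos a)) (qmul (qpow X2 (pos b)) (qpow X0 (pos (- b)))))))"

definition prec :: "int \<times> int \<Rightarrow> int \<times> int \<Rightarrow> bool" where
  "prec p p' = (case p of (a', b') \<Rightarrow> case p' of (a, b) \<Rightarrow>
      pos (- a') \<le> pos (- a) \<and> pos (- b') \<le> pos (- b))"

text \<open>Coefficient set q^(-1/2) Z[q^(-1/2)], as scalars in T.\<close>
definition negcoef :: "qt set" where
  "negcoef = {f. Poly_Mapping.keys f \<subseteq> {(n, 0, 0) | n. n < 0}}"

definition Sigma :: "int \<times> int \<Rightarrow> qt set" where
  "Sigma cd = {x. \<exists>S f. finite S \<and> (\<forall>p\<in>S. prec p cd \<and> f p \<in> negcoef)
                     \<and> x = (\<Sum>p\<in>S. qmul (f p) (E p))}"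

end

theory Submission
  imports Defs
begin

(* Everything is computed in the quantum torus, turned into a ring. There the cluster variables
   X0, X3, X4 are explicit Laurent polynomials, v = q^(1/2) is central, and the generators
   q-commute or satisfy exchange relations. Straightening each product of the lemma with these
   relations gives the expected standard monomial plus a correction term. The correction terms
   are controlled by tracking, for combinations of standard monomials, the index (c, d) below
   which they lie and a bound N on the v-degree of their coefficients: left multiplication by
   X2 raises d and keeps N (when c >= 0), left multiplication by X3 lowers c and costs a factor
   v^(-b) on E(a, b). In every case the resulting bound on N is negative, i.e. the coefficients
   lie in q^(-1/2) Z[q^(-1/2)]. *)

section \<open>The quantum torus as a ring\<close>

lemma qmul_expand:
  assumes "finite K" "Poly_Mapping.keys p \<subseteq> K" "finite L" "Poly_Mapping.keys r \<subseteq> L"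
  shows "qmul p r = (\<Sum>k\<in>K. \<Sum>l\<in>L.
    Poly_Mapping.single (mulkey k l) (Poly_Mapping.lookup p k * Poly_Mapping.lookup r l))"
proof -
  have "qmul p r = (\<Sum>k\<in>Poly_Mapping.keys p. \<Sum>l\<in>L.
      Poly_Mapping.single (mulkey k l) (Poly_Mapping.lookup p k * Poly_Mapping.lookup r l))"
    unfolding qmul_def
    by (intro sum.cong[OF refl] sum.mono_neutral_left) (use assms in \<open>auto simp: in_keys_iff\<close>)
  also have "\<dots> = (\<Sum>k\<in>K. \<Sum>l\<in>L.
      Poly_Mapping.single (mulkey k l) (Poly_Mapping.lookup p k * Poly_Mapping.lookup r l))"
    by (rule sum.mono_neutral_left) (use assms in \<open>auto simp: in_keys_iff\<close>)
  finally show ?thesis .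
qed

lemma qmul_add_left: "qmul (p + p') r = qmul p r + qmul p' r"
proof -
  let ?K = "Poly_Mapping.keys p \<union> Poly_Mapping.keys p'" and ?L = "Poly_Mapping.keys r"
  have "Poly_Mapping.keys (p + p') \<subseteq> ?K" by (rule keys_add)
  then show ?thesis
    by (simp add: qmul_expand[of ?K _ ?L] lookup_add distrib_right single_add sum.distrib)
qed

lemma qmul_add_right: "qmul r (p + p') = qmul r p + qmul r p'"
proof -
  let ?K = "Poly_Mapping.keys p \<union> Poly_Mapping.keys p'" and ?L = "Poly_Mapping.keys r"
  have "Poly_Mapping.keys (p + p') \<subseteq> ?K" by (rule keys_add)
  then show ?thesis
    by (simp add: qmul_expand[of ?L _ ?K] lookup_add distrib_left single_add sum.distrib)
qed

lemma qmul_zero_left [simp]: "qmul 0 r = 0"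
  by (simp add: qmul_def)

lemma qmul_zero_right [simp]: "qmul r 0 = 0"
  by (simp add: qmul_def)

lemma qmul_sum_left: "finite S \<Longrightarrow> qmul (sum f S) r = (\<Sum>s\<in>S. qmul (f s) r)"
  by (induction S rule: finite_induct) (auto simp: qmul_add_left)

lemma qmul_sum_right: "finite S \<Longrightarrow> qmul r (sum f S) = (\<Sum>s\<in>S. qmul r (f s))"
  by (induction S rule: finite_induct) (auto simp: qmul_add_right)

lemma qmul_single:
  "qmul (Poly_Mapping.single k x) (Poly_Mapping.single l y) = Poly_Mapping.single (mulkey k l) (x * y)"
  by (subst qmul_expand[of "{k}" _ "{l}"]) auto

lemma poly_mapping_sum_single:
  "p = (\<Sum>k\<in>Poly_Mapping.keys p. Poly_Mapping.single k (Poly_Mapping.lookup p k))"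
  by (rule poly_mapping_eqI) (simp add: lookup_sum lookup_single when_def in_keys_iff)

lemma mulkey_assoc: "mulkey (mulkey k l) m = mulkey k (mulkey l m)"
  by (cases k; cases l; cases m) (simp add: mulkey_def algebra_simps)

lemma mulkey_zero: "mulkey (0, 0, 0) l = l" "mulkey l (0, 0, 0) = l"
  by (cases l; simp add: mulkey_def)+

lemma qmul_assoc: "qmul (qmul p r) s = qmul p (qmul r s)"
proof -
  let ?sp = "\<Sum>k\<in>Poly_Mapping.keys p. Poly_Mapping.single k (Poly_Mapping.lookup p k)"
  let ?sr = "\<Sum>k\<in>Poly_Mapping.keys r. Poly_Mapping.single k (Poly_Mapping.lookup r k)"
  let ?ss = "\<Sum>k\<in>Poly_Mapping.keys s. Poly_Mapping.single k (Poly_Mapping.lookup s k)"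
  have "qmul (qmul ?sp ?sr) ?ss = qmul ?sp (qmul ?sr ?ss)"
    by (simp add: qmul_sum_left qmul_sum_right qmul_single mulkey_assoc mult.assoc)
  then show ?thesis
    by (simp flip: poly_mapping_sum_single)
qed

lemma qmul_one_left: "qmul qone p = p"
proof -
  have "qmul qone (\<Sum>k\<in>Poly_Mapping.keys p. Poly_Mapping.single k (Poly_Mapping.lookup p k))
      = (\<Sum>k\<in>Poly_Mapping.keys p. Poly_Mapping.single k (Poly_Mapping.lookup p k))"
    by (simp add: qmul_sum_right qone_def mon_def qmul_single mulkey_zero)
  then show ?thesis
    by (simp flip: poly_mapping_sum_single)
qed

lemma qmul_one_right: "qmul p qone = p"
proof -
  have "qmul (\<Sum>k\<in>Poly_Mapping.keys p. Poly_Mapping.single k (Poly_Mapping.lookup p k)) qone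
      = (\<Sum>k\<in>Poly_Mapping.keys p. Poly_Mapping.single k (Poly_Mapping.lookup p k))"
    by (simp add: qmul_sum_left qone_def mon_def qmul_single mulkey_zero)
  then show ?thesis
    by (simp flip: poly_mapping_sum_single)
qed

lemma qmul_scalar_commute:
  assumes "Poly_Mapping.keys f \<subseteq> {(n, 0, 0) | n. True}"
  shows "qmul f p = qmul p f"
proof -
  have "mulkey k l = mulkey l k" if "k \<in> Poly_Mapping.keys f" for k l
    using assms that by (cases l) (auto simp: mulkey_def)
  then show ?thesis
    unfolding qmul_def by (subst sum.swap) (auto intro!: sum.cong simp: mult.commute)
qed

lemma keys_qmul:
  "Poly_Mapping.keys (qmul f g) \<subseteq> {mulkey k l | k l. k \<in> Poly_Mapping.keys f \<and> l \<in> Poly_Mapping.keys g}"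
  unfolding qmul_def
  by (rule order_trans[OF keys_sum]) (use keys_sum in \<open>fastforce split: if_splits\<close>)

lemma qone_neq_zero: "qone \<noteq> 0"
  by (metis lookup_single_eq lookup_zero mon_def one_neq_zero qone_def)

typedef qtorus = "UNIV :: qt set"
  by simp

setup_lifting type_definition_qtorus

instantiation qtorus :: ring_1
begin

lift_definition zero_qtorus :: qtorus is 0 .
lift_definition one_qtorus :: qtorus is qone .
lift_definition plus_qtorus :: "qtorus \<Rightarrow> qtorus \<Rightarrow> qtorus" is "(+)" .
lift_definition minus_qtorus :: "qtorus \<Rightarrow> qtorus \<Rightarrow> qtorus" is "(-)" .
lift_definition uminus_qtorus :: "qtorus \<Rightarrow> qtorus" is uminus .
lift_definition times_qtorus :: "qtorus \<Rightarrow> qtorus \<Rightarrow> qtorus" is qmul .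

instance
  by standard (transfer; simp add: algebra_simps qmul_assoc qmul_add_left qmul_add_right
      qmul_one_left qmul_one_right qone_neq_zero)+

end

section \<open>Cluster variables and standard monomials\<close>

lift_definition tmon :: "int \<Rightarrow> int \<Rightarrow> int \<Rightarrow> qtorus" is mon .

lemma tmon_mult: "tmon n a b * tmon m c d = tmon (n + m - 2 * b * c) (a + c) (b + d)"
  by transfer (simp add: mon_def qmul_single mulkey_def)

lemma tmon_zero [simp]: "tmon 0 0 0 = 1"
  by transfer (simp add: qone_def)

definition v :: "int \<Rightarrow> qtorus" where "v k = tmon k 0 0"

(* X0, X3, X4 solved from the exchange relations: X0 = v X1 X2^-1 + X2^-1,
   X3 = v^4 X1^-1 X2^4 + X1^-1, X4 = v^3 X1^-1 X2^3 + v^-1 X1^-1 X2^-1 + X2^-1. *)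
definition x1 :: qtorus where "x1 = tmon 0 1 0"
definition x2 :: qtorus where "x2 = tmon 0 0 1"
definition x0 :: qtorus where "x0 = tmon 1 1 (-1) + tmon 0 0 (-1)"
definition x3 :: qtorus where "x3 = tmon 4 (-1) 4 + tmon 0 (-1) 0"
definition x4 :: qtorus where "x4 = tmon 3 (-1) 3 + tmon (-1) (-1) (-1) + tmon 0 0 (-1)"

lemmas tmon_simps = tmon_mult distrib_left distrib_right v_def x1_def x2_def x0_def x3_def x4_def

lemma the_qmul_right_factor:
  assumes "qmul c c' = qone" "qmul y c = r"
  shows "(THE x. qmul x c = r) = y"
proof (rule the_equality)
  fix x assume "qmul x c = r"
  then have "qmul (qmul x c) c' = qmul (qmul y c) c'" using assms(2) by simp
  then show "x = y" by (simp add: qmul_assoc assms(1) qmul_one_right)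
qed (fact assms(2))

lemma the_qmul_left_factor:
  assumes "qmul c' c = qone" "qmul c y = r"
  shows "(THE x. qmul c x = r) = y"
proof (rule the_equality)
  fix x assume "qmul c x = r"
  then have "qmul c' (qmul c x) = qmul c' (qmul c y)" using assms(2) by simp
  then show "x = y" by (simp flip: qmul_assoc add: assms(1) qmul_one_left)
qed (fact assms(2))

lemmas Rep_qtorus_ops = zero_qtorus.rep_eq one_qtorus.rep_eq plus_qtorus.rep_eq
  minus_qtorus.rep_eq uminus_qtorus.rep_eq times_qtorus.rep_eq tmon.rep_eq

lemma Rep_qtorus_power: "Rep_qtorus (x ^ n) = qpow (Rep_qtorus x) n"
  by (induction n) (simp_all add: Rep_qtorus_ops)

lemma Rep_qtorus_sum: "Rep_qtorus (sum f S) = (\<Sum>s\<in>S. Rep_qtorus (f s))"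
  by (induction S rule: infinite_finite_induct) (simp_all add: Rep_qtorus_ops)

lemma X1_eq: "X1 = Rep_qtorus x1"
  by (simp add: X1_def x1_def tmon.rep_eq)

lemma X2_eq: "X2 = Rep_qtorus x2"
  by (simp add: X2_def x2_def tmon.rep_eq)

lemma X0_eq: "X0 = Rep_qtorus x0"
proof -
  have "x0 * x2 = v 1 * x1 + 1" and "x2 * tmon 0 0 (-1) = 1"
    by (simp_all add: tmon_simps)
  from this[THEN arg_cong[where f = Rep_qtorus]] show ?thesis
    unfolding X0_def X1_eq X2_eq
    by (intro the_qmul_right_factor[where c' = "mon 0 0 (-1)"]) (simp_all add: Rep_qtorus_ops v_def)
qed

lemma X3_eq: "X3 = Rep_qtorus x3"
proof -
  have "x1 * x3 = v 4 * x2 ^ 4 + 1" and "tmon 0 (-1) 0 * x1 = 1"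
    by (simp_all add: tmon_simps power4_eq_xxxx)
  from this[THEN arg_cong[where f = Rep_qtorus]] show ?thesis
    unfolding X3_def X1_eq X2_eq
    by (intro the_qmul_left_factor[where c' = "mon 0 (-1) 0"])
      (simp_all add: Rep_qtorus_ops Rep_qtorus_power v_def)
qed

lemma X4_eq: "X4 = Rep_qtorus x4"
proof -
  have "x2 * x4 = v 1 * x3 + 1" and "tmon 0 0 (-1) * x2 = 1"
    by (simp_all add: tmon_simps)
  from this[THEN arg_cong[where f = Rep_qtorus]] show ?thesis
    unfolding X4_def X3_eq X2_eq
    by (intro the_qmul_left_factor[where c' = "mon 0 0 (-1)"]) (simp_all add: Rep_qtorus_ops v_def)
qed

lemma v_commute: "v k * x = x * v k"
  unfolding v_def by transfer (simp add: qmul_scalar_commute mon_def)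

lemma v_mult: "v k * v l = v (k + l)"
  by (simp add: v_def tmon_mult)

lemma v_zero [simp]: "v 0 = 1"
  by (simp add: v_def)

lemma v_mult_left: "v k * (v l * x) = v (k + l) * x"
  by (simp add: v_mult flip: mult.assoc)

(* NO_MATCH stops the simplifier from swapping two powers of v forever. *)
lemma v_pull_left: "NO_MATCH (v j) x \<Longrightarrow> x * (v k * y) = v k * (x * y)"
  by (simp add: v_commute[of k x] flip: mult.assoc)

lemmas v_normalize = mult.assoc v_mult_left v_pull_left

lemma v_mult_cong: "k = l \<Longrightarrow> v k * x = v l * x"
  by simp

lemma x1_x2_comm: "x1 * x2 = v 2 * (x2 * x1)" by (simp add: tmon_simps)
lemma x0_x1_comm: "x0 * x1 = v 2 * (x1 * x0)" by (simp add: tmon_simps)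
lemma x2_x3_comm: "x2 * x3 = v 2 * (x3 * x2)" by (simp add: tmon_simps)
lemma x3_x4_comm: "x3 * x4 = v 2 * (x4 * x3)" by (simp add: tmon_simps ac_simps)

lemma x2_x0_exchange: "x2 * x0 = v (-1) * x1 + 1"
  by (simp add: tmon_simps)

lemma x3_x1_exchange: "x3 * x1 = v (-4) * x2 ^ 4 + 1"
  by (simp add: tmon_simps power4_eq_xxxx mult.assoc)

lemma x4_x2_exchange: "x4 * x2 = v (-1) * x3 + 1"
  by (simp add: tmon_simps)

lemma x4_x1_eq: "x4 * x1 = v (-3) * x2 ^ 3 + v 1 * x0"
  by (simp add: tmon_simps power3_eq_cube mult.assoc ac_simps)

lemma x4_eq_x3_x0: "x4 = v (-1) * (x3 * x0) - v (-4) * x2 ^ 3"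
  by (simp add: tmon_simps power3_eq_cube mult.assoc ac_simps)

lemma qcomm_sym: "y * x = v c * (x * y) \<Longrightarrow> x * y = v (- c) * (y * x)"
  by (simp add: v_mult_left)

lemma qcomm_power_left:
  assumes "y * x = v c * (x * y)"
  shows "y ^ n * x = v (c * int n) * (x * y ^ n)"
proof (induction n)
  case (Suc n)
  have "y ^ Suc n * x = y ^ n * (y * x)" by (simp only: power_Suc2 mult.assoc)
  also have "\<dots> = v c * (y ^ n * x * y)" by (simp add: assms v_pull_left mult.assoc)
  also have "\<dots> = v (c * int (Suc n)) * (x * y ^ Suc n)"
    by (simp add: Suc v_mult_left mult.assoc power_commutes algebra_simps)
  finally show ?case .
qed simp

lemma qcomm_power_right:
  assumes "y * x = v c * (x * y)"
  shows "y * x ^ k = v (c * int k) * (x ^ k * y)"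
proof (induction k)
  case (Suc k)
  have "y * x ^ Suc k = v c * (x * (y * x ^ k))" by (simp add: assms flip: mult.assoc)
  also have "\<dots> = v (c * int (Suc k)) * (x ^ Suc k * y)"
    by (simp add: Suc v_normalize algebra_simps)
  finally show ?case .
qed simp

lemma x1_power_x2: "x1 ^ i * x2 = v (2 * int i) * (x2 * x1 ^ i)"
  using qcomm_power_left[OF x1_x2_comm] by simp

lemma x2_power_x1: "x2 ^ j * x1 = v (- 2 * int j) * (x1 * x2 ^ j)"
  using qcomm_power_left[OF qcomm_sym[OF x1_x2_comm]] by simp

lemma x2_x1_power: "x2 * x1 ^ i = v (- 2 * int i) * (x1 ^ i * x2)"
  using qcomm_power_right[OF qcomm_sym[OF x1_x2_comm]] by simp

lemma x0_power_x1: "x0 ^ m * x1 = v (2 * int m) * (x1 * x0 ^ m)"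
  using qcomm_power_left[OF x0_x1_comm] by simp

lemma x0_x1_power: "x0 * x1 ^ i = v (2 * int i) * (x1 ^ i * x0)"
  using qcomm_power_right[OF x0_x1_comm] by simp

lemma x3_power_x2: "x3 ^ n * x2 = v (- 2 * int n) * (x2 * x3 ^ n)"
  using qcomm_power_left[OF qcomm_sym[OF x2_x3_comm]] by simp

lemma x4_x3_power: "x4 * x3 ^ n = v (- 2 * int n) * (x3 ^ n * x4)"
  using qcomm_power_right[OF qcomm_sym[OF x3_x4_comm]] by simp

definition E_left :: "int \<Rightarrow> qtorus" where "E_left a = x3 ^ pos (- a) * x1 ^ pos a"
definition E_right :: "int \<Rightarrow> qtorus" where "E_right b = x2 ^ pos b * x0 ^ pos (- b)"

lemma E_left_nonneg: "E_left (int i) = x1 ^ i"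
  by (simp add: E_left_def pos_def)

lemma E_left_nonpos: "E_left (- int n) = x3 ^ n"
  by (simp add: E_left_def pos_def)

lemma E_right_nonneg: "E_right (int j) = x2 ^ j"
  by (simp add: E_right_def pos_def)

lemma E_right_nonpos: "E_right (- int m) = x0 ^ m"
  by (simp add: E_right_def pos_def)

lemma E_left_zero [simp]: "E_left 0 = 1"
  by (simp add: E_left_def pos_def)

lift_definition std :: "int \<times> int \<Rightarrow> qtorus" is E .

lemma std_eq: "std (a, b) = v (- a * b) * (E_left a * E_right b)"
  unfolding Rep_qtorus_inject[symmetric] E_left_def E_right_def mult.assoc
  by (simp add: std.rep_eq E_def Rep_qtorus_ops Rep_qtorus_power v_def X0_eq X1_eq X2_eq X3_eq)

lemma E_left_x2: "E_left a * x2 = v (2 * a) * (x2 * E_left a)"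
  by (cases a rule: int_cases2) (simp_all add: E_left_nonneg E_left_nonpos x1_power_x2 x3_power_x2)

lemma E_right_x1: "E_right b * x1 = v (- 2 * b) * (x1 * E_right b)"
  by (cases b rule: int_cases2) (simp_all add: E_right_nonneg E_right_nonpos x2_power_x1 x0_power_x1)

section \<open>Spans of standard monomials\<close>

definition scalars_le :: "int \<Rightarrow> qt set" where
  "scalars_le N = {f. Poly_Mapping.keys f \<subseteq> {(n, 0, 0) | n. n \<le> N}}"

lemma scalars_le_mono: "f \<in> scalars_le N \<Longrightarrow> N \<le> N' \<Longrightarrow> f \<in> scalars_le N'"
  by (auto simp: scalars_le_def)

lemma zero_in_scalars_le: "0 \<in> scalars_le N"
  by (simp add: scalars_le_def)

lemma mon_in_scalars_le: "mon k 0 0 \<in> scalars_le k"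
  by (simp add: scalars_le_def mon_def)

lemma scalars_le_add: "f \<in> scalars_le N \<Longrightarrow> g \<in> scalars_le N \<Longrightarrow> f + g \<in> scalars_le N"
  using keys_add[of f g] by (auto simp: scalars_le_def)

lemma scalars_le_uminus: "f \<in> scalars_le N \<Longrightarrow> - f \<in> scalars_le N"
  by (auto simp: scalars_le_def keys_def)

lemma scalars_le_qmul:
  assumes "f \<in> scalars_le N" "g \<in> scalars_le K"
  shows "qmul f g \<in> scalars_le (N + K)"
  using keys_qmul[of f g] assms by (fastforce simp: scalars_le_def mulkey_def)

lemma scalar_commute: "f \<in> scalars_le N \<Longrightarrow> Abs_qtorus f * x = x * Abs_qtorus f"
  by (simp add: times_qtorus_def Abs_qtorus_inverse scalars_le_def qmul_scalar_commute[of f]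
      subset_iff)

(* Sigma cd is the image of Span cd (-1); intermediate estimates need other degree bounds. *)
definition Span :: "int \<times> int \<Rightarrow> int \<Rightarrow> qtorus set" where
  "Span cd N = {x. \<exists>S f. finite S \<and> (\<forall>p\<in>S. prec p cd \<and> f p \<in> scalars_le N)
                  \<and> x = (\<Sum>p\<in>S. Abs_qtorus (f p) * std p)}"

lemma SpanE:
  assumes "x \<in> Span cd N"
  obtains S f where "finite S" "\<And>p. p \<in> S \<Longrightarrow> prec p cd"
    "\<And>p. p \<in> S \<Longrightarrow> f p \<in> scalars_le N" "x = (\<Sum>p\<in>S. Abs_qtorus (f p) * std p)"
  using assms unfolding Span_def by (auto intro!: that)

lemma SpanI:
  assumes "finite S" "\<And>p. p \<in> S \<Longrightarrow> prec p cd" "\<And>p. p \<in> S \<Longrightarrow> f p \<in> scalars_le N"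
  shows "(\<Sum>p\<in>S. Abs_qtorus (f p) * std p) \<in> Span cd N"
  using assms unfolding Span_def by blast

lemma zero_in_Span: "0 \<in> Span cd N"
  using SpanI[of "{}"] by simp

lemma std_in_Span: "prec p cd \<Longrightarrow> std p \<in> Span cd 0"
  using SpanI[of "{p}" cd "\<lambda>_. qone" 0] mon_in_scalars_le[of 0]
  by (simp flip: qone_def one_qtorus.abs_eq)

lemma Span_add:
  assumes "x \<in> Span cd N" "y \<in> Span cd N"
  shows "x + y \<in> Span cd N"
proof -
  obtain S f where S: "finite S" "\<And>p. p \<in> S \<Longrightarrow> prec p cd"
    "\<And>p. p \<in> S \<Longrightarrow> f p \<in> scalars_le N"
    and x: "x = (\<Sum>p\<in>S. Abs_qtorus (f p) * std p)"
    using assms(1) by (elim SpanE) (rule that)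
  obtain T g where T: "finite T" "\<And>p. p \<in> T \<Longrightarrow> prec p cd"
    "\<And>p. p \<in> T \<Longrightarrow> g p \<in> scalars_le N"
    and y: "y = (\<Sum>p\<in>T. Abs_qtorus (g p) * std p)"
    using assms(2) by (elim SpanE) (rule that)
  define h where "h p = (if p \<in> S then f p else 0) + (if p \<in> T then g p else 0)" for p
  have "(\<Sum>p\<in>S \<union> T. Abs_qtorus (h p) * std p) = (\<Sum>p\<in>S \<union> T.
      (if p \<in> S then Abs_qtorus (f p) * std p else 0) + (if p \<in> T then Abs_qtorus (g p) * std p else 0))"
    by (rule sum.cong) (simp_all add: h_def distrib_right flip: plus_qtorus.abs_eq zero_qtorus_def)
  then have "x + y = (\<Sum>p\<in>S \<union> T. Abs_qtorus (h p) * std p)"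
    using S(1) T(1) by (simp add: x y sum.distrib sum.If_cases Int_absorb1)
  also have "\<dots> \<in> Span cd N"
    using S T by (intro SpanI) (auto simp: h_def intro!: scalars_le_add zero_in_scalars_le)
  finally show ?thesis .
qed

lemma Span_sum: "finite S \<Longrightarrow> (\<And>s. s \<in> S \<Longrightarrow> g s \<in> Span cd N) \<Longrightarrow> sum g S \<in> Span cd N"
  by (induction S rule: finite_induct) (auto intro: zero_in_Span Span_add)

lemma Span_scalar:
  assumes "f \<in> scalars_le K" "x \<in> Span cd N"
  shows "Abs_qtorus f * x \<in> Span cd (K + N)"
proof -
  obtain S g where S: "finite S" "\<And>p. p \<in> S \<Longrightarrow> prec p cd"
    "\<And>p. p \<in> S \<Longrightarrow> g p \<in> scalars_le N"
    and x: "x = (\<Sum>p\<in>S. Abs_qtorus (g p) * std p)"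
    using assms(2) by (elim SpanE) (rule that)
  have "Abs_qtorus f * x = (\<Sum>p\<in>S. Abs_qtorus (qmul f (g p)) * std p)"
    by (simp add: x sum_distrib_left times_qtorus.abs_eq flip: mult.assoc)
  also have "\<dots> \<in> Span cd (K + N)"
    using S assms(1) by (intro SpanI) (auto intro: scalars_le_qmul)
  finally show ?thesis .
qed

lemma Span_uminus:
  assumes "x \<in> Span cd N"
  shows "- x \<in> Span cd N"
proof -
  obtain S g where S: "finite S" "\<And>p. p \<in> S \<Longrightarrow> prec p cd"
    "\<And>p. p \<in> S \<Longrightarrow> g p \<in> scalars_le N"
    and x: "x = (\<Sum>p\<in>S. Abs_qtorus (g p) * std p)"
    using assms by (elim SpanE) (rule that)
  have "- x = (\<Sum>p\<in>S. Abs_qtorus (- g p) * std p)"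
    by (simp add: x sum_negf flip: uminus_qtorus.abs_eq)
  also have "\<dots> \<in> Span cd N"
    using S by (intro SpanI) (auto intro: scalars_le_uminus)
  finally show ?thesis .
qed

lemma Span_v: "x \<in> Span cd N \<Longrightarrow> v k * x \<in> Span cd (N + k)"
  using Span_scalar[OF mon_in_scalars_le] by (simp add: v_def tmon.abs_eq add.commute)

lemma prec_iff: "prec (a', b') (c, d) \<longleftrightarrow> min c 0 \<le> min a' 0 \<and> min d 0 \<le> min b' 0"
  by (auto simp: prec_def pos_def)

lemma Span_mono:
  assumes "x \<in> Span (c, d) N" "min c' 0 \<le> min c 0" "min d' 0 \<le> min d 0" "N \<le> N'"
  shows "x \<in> Span (c', d') N'"
proof -
  obtain S g where S: "finite S" "\<And>p. p \<in> S \<Longrightarrow> prec p (c, d)"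
    "\<And>p. p \<in> S \<Longrightarrow> g p \<in> scalars_le N"
    and x: "x = (\<Sum>p\<in>S. Abs_qtorus (g p) * std p)"
    using assms(1) by (elim SpanE) (rule that)
  have "prec p (c', d')" if "prec p (c, d)" for p
    using that assms(2,3) by (cases p) (auto simp: prec_iff)
  then show ?thesis
    using S unfolding x by (intro SpanI) (auto intro: scalars_le_mono[OF S(3) assms(4)])
qed

lemma Span_mult_left:
  assumes "x \<in> Span cd N" "\<And>p. prec p cd \<Longrightarrow> y * std p \<in> Span cd' K"
  shows "y * x \<in> Span cd' (N + K)"
proof -
  obtain S g where S: "finite S" "\<And>p. p \<in> S \<Longrightarrow> prec p cd"
    "\<And>p. p \<in> S \<Longrightarrow> g p \<in> scalars_le N"
    and x: "x = (\<Sum>p\<in>S. Abs_qtorus (g p) * std p)"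
    using assms(1) by (elim SpanE) (rule that)
  have "y * x = (\<Sum>p\<in>S. Abs_qtorus (g p) * (y * std p))"
    unfolding x sum_distrib_left
    by (intro sum.cong refl) (metis S(3) scalar_commute mult.assoc)
  also have "\<dots> \<in> Span cd' (N + K)"
    using S assms(2) by (intro Span_sum Span_scalar) auto
  finally show ?thesis .
qed

lemma Span_diff_in_Sigma:
  assumes "x - std p \<in> Span cd (-1)"
  shows "Rep_qtorus x - E p \<in> Sigma cd"
proof -
  obtain S g where S: "finite S" "\<And>p. p \<in> S \<Longrightarrow> prec p cd"
    "\<And>p. p \<in> S \<Longrightarrow> g p \<in> scalars_le (-1)"
    and x: "x - std p = (\<Sum>p\<in>S. Abs_qtorus (g p) * std p)"
    using assms by (elim SpanE) (rule that)
  have "Rep_qtorus x - E p = Rep_qtorus (x - std p)"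
    by (simp add: minus_qtorus.rep_eq std.rep_eq)
  also have "\<dots> = (\<Sum>p\<in>S. qmul (g p) (E p))"
    unfolding x Rep_qtorus_sum times_qtorus.rep_eq std.rep_eq Abs_qtorus_inverse[OF UNIV_I] ..
  finally have "Rep_qtorus x - E p = (\<Sum>p\<in>S. qmul (g p) (E p))" .
  moreover have "g p \<in> negcoef" if "p \<in> S" for p
    using S(3)[OF that] by (auto simp: scalars_le_def negcoef_def)
  ultimately show ?thesis
    unfolding Sigma_def using S(1,2) by (intro CollectI exI[of _ S] exI[of _ g]) auto
qed

section \<open>Straightening\<close>

lemma mult_eq_assoc: "a * b = (c :: 'a :: semigroup_mult) \<Longrightarrow> a * (b * z) = c * z"
  by (metis mult.assoc)

lemma mult_eq_v_mult_assoc: "a * b = v c * (b' * a') \<Longrightarrow> a * (b * z) = v c * (b' * (a' * z))"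
  by (metis mult.assoc v_pull_left v_commute)

lemma power_mult_commute_assoc: "(x :: 'a :: monoid_mult) ^ i * (x * z) = x * (x ^ i * z)"
  by (simp add: power_commutes flip: mult.assoc)

lemmas x2_x0_exchange_assoc =
  mult_eq_assoc[OF x2_x0_exchange, simplified distrib_right mult_1_left mult.assoc]
lemmas x3_x1_exchange_assoc =
  mult_eq_assoc[OF x3_x1_exchange, simplified distrib_right mult_1_left mult.assoc]
lemmas x4_x2_exchange_assoc =
  mult_eq_assoc[OF x4_x2_exchange, simplified distrib_right mult_1_left mult.assoc]
lemmas x4_x1_eq_assoc =
  mult_eq_assoc[OF x4_x1_eq, simplified distrib_right mult_1_left mult.assoc]

lemma x2_times_std_nonneg:
  assumes "a \<ge> 0" "b \<ge> 0"
  shows "x2 * std (a, b) = v (- a) * std (a, b + 1)"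
proof -
  obtain i where a: "a = int i"
    using assms by (intro that[of "nat a"]) simp
  obtain j where b: "b = int j" "b + 1 = int (Suc j)"
    using assms by (intro that[of "nat b"]) simp_all
  show ?thesis
    unfolding std_eq b(2) unfolding a b(1) E_left_nonneg E_right_nonneg
    by (simp add: v_normalize mult_eq_v_mult_assoc[OF x2_x1_power] algebra_simps)
      (rule v_mult_cong, algebra)
qed

lemma x2_times_std_neg:
  assumes "a \<ge> 0" "b < 0"
  shows "x2 * std (a, b) = v (- a) * std (a, b + 1) + v (b - a) * std (a + 1, b + 1)"
proof -
  obtain i where a: "a = int i" "a + 1 = int (Suc i)"
    using assms by (intro that[of "nat a"]) simp_all
  obtain m where b: "b = - int (Suc m)" "b + 1 = - int m"
    using assms by (intro that[of "nat (- b - 1)"]) simp_all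
  show ?thesis
    unfolding std_eq b(2) a(2) unfolding a(1) b(1) E_left_nonneg E_right_nonpos
    by (simp add: v_normalize mult_eq_v_mult_assoc[OF x2_x1_power] x2_x0_exchange_assoc
        power_mult_commute_assoc algebra_simps)
qed

lemma x2_times_std_in_Span:
  assumes "a \<ge> 0"
  shows "x2 * std (a, b) \<in> Span (a, b + 1) 0"
proof -
  have "v (- a) * std (a, b + 1) \<in> Span (a, b + 1) (0 + - a)"
    by (intro Span_v std_in_Span) (simp add: prec_iff)
  then have first: "v (- a) * std (a, b + 1) \<in> Span (a, b + 1) 0"
    by (rule Span_mono) (use assms in simp_all)
  show ?thesis
  proof (cases "b \<ge> 0")
    case True
    then show ?thesis using first assms by (simp add: x2_times_std_nonneg)
  next
    case False
    have "v (b - a) * std (a + 1, b + 1) \<in> Span (a, b + 1) (0 + (b - a))"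
      by (intro Span_v std_in_Span) (use assms in \<open>simp add: prec_iff\<close>)
    then have "v (b - a) * std (a + 1, b + 1) \<in> Span (a, b + 1) 0"
      by (rule Span_mono) (use assms False in simp_all)
    then show ?thesis using False assms by (simp add: x2_times_std_neg Span_add[OF first])
  qed
qed

lemma x2_power_Span:
  assumes "c \<ge> 0" "x \<in> Span (c, d) N"
  shows "x2 ^ k * x \<in> Span (c, d + int k) N"
proof (induction k)
  case (Suc k)
  have "x2 * (x2 ^ k * x) \<in> Span (c, d + int (Suc k)) (N + 0)"
  proof (rule Span_mult_left[OF Suc])
    fix p assume "prec p (c, d + int k)"
    then obtain p1 p2 where p: "p = (p1, p2)" "min p1 0 \<ge> min c 0" "min p2 0 \<ge> min (d + int k) 0"
      by (cases p) (auto simp: prec_iff)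
    then have "p1 \<ge> 0" using assms by (simp add: min_def split: if_splits)
    then have "x2 * std (p1, p2) \<in> Span (p1, p2 + 1) 0" by (rule x2_times_std_in_Span)
    then have "x2 * std (p1, p2) \<in> Span (c, d + int (Suc k)) 0"
      by (rule Span_mono) (use p assms in \<open>auto simp: min_def split: if_splits\<close>)
    then show "x2 * std p \<in> Span (c, d + int (Suc k)) 0"
      using p(1) by simp
  qed
  then show ?case by (simp add: mult.assoc)
qed (use assms in simp)

lemma x3_times_std_nonpos:
  assumes "a \<le> 0"
  shows "v b * (x3 * std (a, b)) = std (a - 1, b)"
proof -
  obtain n where a: "a = - int n" "a - 1 = - int (Suc n)"
    using assms by (intro that[of "nat (- a)"]) simp_all
  show ?thesis
    unfolding std_eq a(2) unfolding a(1) E_left_nonpos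
    by (simp add: v_normalize algebra_simps)
qed

lemma x3_times_std_pos:
  assumes "a > 0"
  shows "v b * (x3 * std (a, b)) = std (a - 1, b) + v (-4) * (x2 ^ 4 * std (a - 1, b))"
proof -
  obtain i where a: "a = int (Suc i)" "a - 1 = int i"
    using assms by (intro that[of "nat (a - 1)"]) simp_all
  show ?thesis
    unfolding std_eq a(2) unfolding a(1) E_left_nonneg
    by (simp add: v_normalize x3_x1_exchange_assoc algebra_simps)
qed

lemma x3_times_std_triangular:
  "v b * (x3 * std (a, b)) - std (a - 1, b) \<in> Span (a - 1, b + 4) (-1)"
proof (cases "a \<le> 0")
  case True
  then show ?thesis by (simp add: x3_times_std_nonpos zero_in_Span)
next
  case False
  have "std (a - 1, b) \<in> Span (a - 1, b) 0" by (rule std_in_Span) (simp add: prec_iff)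
  then have "x2 ^ 4 * std (a - 1, b) \<in> Span (a - 1, b + int 4) 0"
    by (rule x2_power_Span[rotated]) (use False in simp)
  then have "v (-4) * (x2 ^ 4 * std (a - 1, b)) \<in> Span (a - 1, b + 4) (0 + -4)"
    by (intro Span_v) simp
  then have "v (-4) * (x2 ^ 4 * std (a - 1, b)) \<in> Span (a - 1, b + 4) (-1)"
    by (rule Span_mono) simp_all
  then show ?thesis using False by (simp add: x3_times_std_pos)
qed

lemma x3_times_std_in_Span: "x3 * std (a, b) \<in> Span (a - 1, b) (- b)"
proof -
  have "v b * (x3 * std (a, b)) - std (a - 1, b) \<in> Span (a - 1, b) 0"
    by (rule Span_mono[OF x3_times_std_triangular]) simp_all
  moreover have "std (a - 1, b) \<in> Span (a - 1, b) 0" by (rule std_in_Span) (simp add: prec_iff)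
  ultimately have "v (- b) * ((v b * (x3 * std (a, b)) - std (a - 1, b)) + std (a - 1, b))
      \<in> Span (a - 1, b) (0 + - b)"
    by (intro Span_v Span_add)
  then show ?thesis by (simp add: v_mult_left)
qed

(* Each X3 applied to E(p1, p2) costs v^(-p2), and \<beta> bounds all the p2 that occur. *)
lemma x3_power_Span:
  assumes "x \<in> Span (c, d) N" "\<beta> \<le> min d 0"
  shows "v (\<beta> * int n) * (x3 ^ n * x) \<in> Span (min c 0 - int n, d) N"
proof (induction n)
  case 0
  show ?case by (simp add: Span_mono[OF assms(1)])
next
  case (Suc n)
  have "(v \<beta> * x3) * (v (\<beta> * int n) * (x3 ^ n * x)) \<in> Span (min c 0 - int (Suc n), d) (N + 0)"
  proof (rule Span_mult_left[OF Suc])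
    fix p assume "prec p (min c 0 - int n, d)"
    then obtain p1 p2 where p: "p = (p1, p2)" "min p1 0 \<ge> min c 0 - int n" "min p2 0 \<ge> min d 0"
      by (cases p) (auto simp: prec_iff)
    have "v \<beta> * (x3 * std (p1, p2)) \<in> Span (p1 - 1, p2) (- p2 + \<beta>)"
      by (rule Span_v[OF x3_times_std_in_Span])
    then have "v \<beta> * (x3 * std (p1, p2)) \<in> Span (min c 0 - int (Suc n), d) 0"
      by (rule Span_mono) (use p assms(2) in \<open>auto simp: min_def split: if_splits\<close>)
    then show "v \<beta> * x3 * std p \<in> Span (min c 0 - int (Suc n), d) 0"
      using p by (simp add: mult.assoc)
  qed
  then show ?case by (simp add: v_normalize algebra_simps)
qed

lemma x3_power_x2_power_std_in_Span:
  "v c * (x3 ^ n * (x2 ^ k * std (0, b)))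
    \<in> Span (- int n, b + int k) (c - min (b + int k) 0 * int n)"
proof -
  let ?\<beta> = "min (b + int k) 0"
  have "std (0, b) \<in> Span (0, b) 0" by (rule std_in_Span) (simp add: prec_iff)
  then have "x2 ^ k * std (0, b) \<in> Span (0, b + int k) 0" by (rule x2_power_Span[rotated]) simp
  then have "v (?\<beta> * int n) * (x3 ^ n * (x2 ^ k * std (0, b))) \<in> Span (min 0 0 - int n, b + int k) 0"
    by (rule x3_power_Span) simp
  then have "v (c - ?\<beta> * int n) * (v (?\<beta> * int n) * (x3 ^ n * (x2 ^ k * std (0, b))))
      \<in> Span (- int n, b + int k) (0 + (c - ?\<beta> * int n))"
    by (intro Span_v) simp
  then show ?thesis by (simp add: v_mult_left)
qed

lemma std_times_x1_nonneg:
  assumes "a \<ge> 0"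
  shows "v b * (std (a, b) * x1) = std (a + 1, b)"
proof -
  obtain i where a: "a = int i" "a + 1 = int (Suc i)"
    using assms by (intro that[of "nat a"]) simp_all
  show ?thesis
    unfolding std_eq a(2) unfolding a(1) E_left_nonneg
    by (simp add: v_normalize E_right_x1 power_mult_commute_assoc algebra_simps)
qed

lemma std_times_x1_neg:
  assumes "a < 0"
  shows "v b * (std (a, b) * x1)
    = std (a + 1, b) + v (- a * b - b - 4) * (x3 ^ nat (- a - 1) * (x2 ^ 4 * std (0, b)))"
proof -
  obtain n where a: "a = - int (Suc n)" "a + 1 = - int n" "nat (- a - 1) = n"
    using assms by (intro that[of "nat (- a - 1)"]) simp_all
  show ?thesis
    unfolding std_eq a(2,3) unfolding a(1) E_left_nonpos power_Suc2
    by (simp add: v_normalize E_right_x1 x3_x1_exchange_assoc algebra_simps)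
qed

lemma std_times_x1_triangular:
  "v b * (std (a, b) * x1) - std (a + 1, b) \<in> Span (a + 1, b + 4) (-1)"
proof (cases "a \<ge> 0")
  case True
  then show ?thesis by (simp add: std_times_x1_nonneg zero_in_Span)
next
  case False
  then obtain n where a: "a = - int (Suc n)" "a + 1 = - int n" "nat (- a - 1) = n"
    by (intro that[of "nat (- a - 1)"]) simp_all
  let ?R = "v (- a * b - b - 4) * (x3 ^ n * (x2 ^ 4 * std (0, b)))"
  have diff: "v b * (std (a, b) * x1) - std (a + 1, b) = ?R"
    using std_times_x1_neg[of a b] False a(3) by simp
  show ?thesis
  proof (cases "b \<ge> 0")
    case True
    then obtain j where b: "b = int j" "b + 4 = int (4 + j)"
      by (intro that[of "nat b"]) simp_all
    have "?R = v (4 * a) * std (a + 1, b + 4)"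
      unfolding std_eq a(2) b(2) unfolding b(1) E_left_nonpos E_right_nonneg power_add
      by (simp add: v_normalize a(1) algebra_simps)
    moreover have "v (4 * a) * std (a + 1, b + 4) \<in> Span (a + 1, b + 4) (0 + 4 * a)"
      by (intro Span_v std_in_Span) (simp add: prec_iff)
    ultimately have "?R \<in> Span (a + 1, b + 4) (0 + 4 * a)" by simp
    then show ?thesis unfolding diff by (rule Span_mono) (use False in simp_all)
  next
    case False
    have "b * int n \<le> min (b + 4) 0 * int n"
      using False by (simp add: mult_right_mono)
    then have "- a * b - b - 4 - min (b + int 4) 0 * int n \<le> -1"
      by (simp add: a(1) algebra_simps)
    with x3_power_x2_power_std_in_Span[of "- a * b - b - 4" n 4 b]
    show ?thesis unfolding diff by (elim Span_mono) (simp_all add: a(2))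
  qed
qed

lemma std_times_x0_nonpos:
  assumes "b \<le> 0"
  shows "v a * (std (a, b) * x0) = std (a, b - 1)"
proof -
  obtain m where b: "b = - int m" "b - 1 = - int (Suc m)"
    using assms by (intro that[of "nat (- b)"]) simp_all
  show ?thesis
    unfolding std_eq b(2) unfolding b(1) E_right_nonpos power_Suc2
    by (simp add: v_normalize algebra_simps)
qed

lemma std_times_x0_pos:
  assumes "b > 0"
  shows "v a * (std (a, b) * x0) = std (a, b - 1) + v (-1) * (std (a, b - 1) * x1)"
proof -
  obtain j where b: "b = int (Suc j)" "b - 1 = int j"
    using assms by (intro that[of "nat (b - 1)"]) simp_all
  show ?thesis
    unfolding std_eq b(2) unfolding b(1) E_right_nonneg power_Suc2
    by (simp add: v_normalize x2_x0_exchange algebra_simps)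
qed

lemma std_times_x0_triangular:
  "v a * (std (a, b) * x0) - std (a, b - 1) \<in> Span (a + 1, b - 1) (-1)"
proof (cases "b \<le> 0")
  case True
  then show ?thesis by (simp add: std_times_x0_nonpos zero_in_Span)
next
  case False
  have "v (b - 1) * (std (a, b - 1) * x1) - std (a + 1, b - 1) \<in> Span (a + 1, b - 1) 0"
    by (rule Span_mono[OF std_times_x1_triangular]) (use False in simp_all)
  moreover have "std (a + 1, b - 1) \<in> Span (a + 1, b - 1) 0"
    by (rule std_in_Span) (simp add: prec_iff)
  ultimately have "v (- b) * ((v (b - 1) * (std (a, b - 1) * x1) - std (a + 1, b - 1))
      + std (a + 1, b - 1)) \<in> Span (a + 1, b - 1) (0 + - b)"
    by (intro Span_v Span_add)
  then have "v (-1) * (std (a, b - 1) * x1) \<in> Span (a + 1, b - 1) (0 + - b)"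
    by (simp add: v_mult_left)
  then have "v (-1) * (std (a, b - 1) * x1) \<in> Span (a + 1, b - 1) (-1)"
    by (rule Span_mono) (use False in simp_all)
  then show ?thesis using False by (simp add: std_times_x0_pos)
qed

lemma x4_times_std_b_pos:
  assumes "b > 0"
  shows "v (- a) * (x4 * std (a, b)) = std (a, b - 1) + v (-1) * (x3 * std (a, b - 1))"
proof -
  obtain j where b: "b = int (Suc j)" "b - 1 = int j"
    using assms by (intro that[of "nat (b - 1)"]) simp_all
  show ?thesis
    unfolding std_eq b(2) unfolding b(1) E_right_nonneg
    by (simp add: v_normalize mult_eq_v_mult_assoc[OF E_left_x2] x4_x2_exchange_assoc algebra_simps)
qed

lemma x4_times_std_triangular_b_pos:
  assumes "b > 0"
  shows "v (- a) * (x4 * std (a, b)) - std (a, b - 1) \<in> Span (a - 1, b - 1) (-1)"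
proof -
  have "v (-1) * (x3 * std (a, b - 1)) \<in> Span (a - 1, b - 1) (- (b - 1) + -1)"
    by (rule Span_v[OF x3_times_std_in_Span])
  then have "v (-1) * (x3 * std (a, b - 1)) \<in> Span (a - 1, b - 1) (-1)"
    by (rule Span_mono) (use assms in simp_all)
  then show ?thesis using assms by (simp add: x4_times_std_b_pos)
qed

lemma x4_times_std_a_pos_b_nonpos:
  assumes "a > 0" "b \<le> 0"
  shows "v (b - a) * (x4 * std (a, b))
    = std (a - 1, b - 1) + v (- a - 3) * (x2 ^ 3 * std (a - 1, b))"
proof -
  obtain i where a: "a = int (Suc i)" "a - 1 = int i"
    using assms by (intro that[of "nat (a - 1)"]) simp_all
  obtain m where b: "b = - int m" "b - 1 = - int (Suc m)"
    using assms by (intro that[of "nat (- b)"]) simp_all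
  show ?thesis
    unfolding std_eq a(2) b(2) unfolding a(1) b(1) E_left_nonneg E_right_nonpos
    by (simp add: v_normalize x4_x1_eq_assoc mult_eq_v_mult_assoc[OF x0_x1_power] algebra_simps)
qed

lemma x4_times_std_triangular_a_pos_b_nonpos:
  assumes "a > 0" "b \<le> 0"
  shows "v (b - a) * (x4 * std (a, b)) - std (a - 1, b - 1) \<in> Span (a - 1, b + 3) (-1)"
proof -
  have "std (a - 1, b) \<in> Span (a - 1, b) 0" by (rule std_in_Span) (simp add: prec_iff)
  then have "x2 ^ 3 * std (a - 1, b) \<in> Span (a - 1, b + int 3) 0"
    by (rule x2_power_Span[rotated]) (use assms in simp)
  then have "v (- a - 3) * (x2 ^ 3 * std (a - 1, b)) \<in> Span (a - 1, b + 3) (0 + (- a - 3))"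
    by (intro Span_v) simp
  then have "v (- a - 3) * (x2 ^ 3 * std (a - 1, b)) \<in> Span (a - 1, b + 3) (-1)"
    by (rule Span_mono) (use assms in simp_all)
  then show ?thesis using assms by (simp add: x4_times_std_a_pos_b_nonpos)
qed

lemma x4_times_std_nonpos:
  assumes "a \<le> 0" "b \<le> 0"
  shows "v (b - a) * (x4 * std (a, b))
    = std (a - 1, b - 1) - v (a + b - a * b - 4) * (x3 ^ nat (- a) * (x2 ^ 3 * std (0, b)))"
proof -
  obtain n where a: "a = - int n" "a - 1 = - int (Suc n)" "nat (- a) = n"
    using assms by (intro that[of "nat (- a)"]) simp_all
  obtain m where b: "b = - int m" "b - 1 = - int (Suc m)"
    using assms by (intro that[of "nat (- b)"]) simp_all
  have x4_std: "x4 * std (a, b) = v (- a * b - 2 * int n) * (x3 ^ n * (x4 * x0 ^ m))"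
    unfolding std_eq unfolding a(1) b(1) E_left_nonpos E_right_nonpos
    by (simp add: v_normalize mult_eq_v_mult_assoc[OF x4_x3_power] algebra_simps)
  have std_shift: "std (a - 1, b - 1) = v (- (int n + 1) * (int m + 1)) * (x3 ^ Suc n * x0 ^ Suc m)"
    unfolding std_eq a(2) b(2) E_left_nonpos E_right_nonpos by (simp add: algebra_simps)
  have std_0b: "std (0, b) = x0 ^ m"
    unfolding std_eq b(1) E_right_nonpos by simp
  show ?thesis
    unfolding x4_std unfolding std_shift std_0b x4_eq_x3_x0 a(3)
    by (simp add: v_normalize power_mult_commute_assoc algebra_simps a(1) b(1))
qed

lemma x4_times_std_triangular_nonpos:
  assumes "a \<le> 0" "b \<le> 0"
  shows "v (b - a) * (x4 * std (a, b)) - std (a - 1, b - 1) \<in> Span (a, b) (-1)"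
proof -
  obtain n where a: "a = - int n" "nat (- a) = n"
    using assms by (intro that[of "nat (- a)"]) simp_all
  have "b * int n \<le> min (b + 3) 0 * int n"
    using assms by (simp add: mult_right_mono)
  then have "a + b - a * b - 4 - min (b + int 3) 0 * int n \<le> -1"
    using assms by (simp add: a(1) algebra_simps)
  with x3_power_x2_power_std_in_Span[of "a + b - a * b - 4" n 3 b]
  have "v (a + b - a * b - 4) * (x3 ^ n * (x2 ^ 3 * std (0, b))) \<in> Span (a, b) (-1)"
    by (elim Span_mono) (simp_all add: a(1))
  then show ?thesis
    using x4_times_std_nonpos[OF assms] a(2) by (simp add: Span_uminus)
qed

theorem lemma4p3:
  fixes a b :: int
  shows "(qmul (qmul (mon a 0 0) (E (a, b))) X0 - E (a, b - 1) \<in> Sigma (a + 1, b - 1))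
    \<and> (qmul (qmul (mon b 0 0) X3) (E (a, b)) - E (a - 1, b) \<in> Sigma (a - 1, b + 4))
    \<and> (qmul (qmul (mon b 0 0) (E (a, b))) X1 - E (a + 1, b) \<in> Sigma (a + 1, b + 4))
    \<and> (b > 0 \<longrightarrow> qmul (qmul (mon (- a) 0 0) X4) (E (a, b)) - E (a, b - 1) \<in> Sigma (a - 1, b - 1))
    \<and> (a > 0 \<and> b \<le> 0 \<longrightarrow>
         qmul (qmul (mon (- (a - b)) 0 0) X4) (E (a, b)) - E (a - 1, b - 1) \<in> Sigma (a - 1, b + 3))
    \<and> (a \<le> 0 \<and> b \<le> 0 \<longrightarrow>
         qmul (qmul (mon (- (a - b)) 0 0) X4) (E (a, b)) - E (a - 1, b - 1) \<in> Sigma (a, b))"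
proof -
  have to_torus: "qmul (qmul (mon k 0 0) (E p)) Y = Rep_qtorus (v k * (std p * Abs_qtorus Y))"
    "qmul (qmul (mon k 0 0) Y) (E p) = Rep_qtorus (v k * (Abs_qtorus Y * std p))" for k p Y
    by (simp_all add: Rep_qtorus_ops v_def std.rep_eq Abs_qtorus_inverse qmul_assoc)
  have generators: "Abs_qtorus X0 = x0" "Abs_qtorus X1 = x1" "Abs_qtorus X3 = x3" "Abs_qtorus X4 = x4"
    by (simp_all add: X0_eq X1_eq X3_eq X4_eq Rep_qtorus_inverse)
  show ?thesis
    unfolding to_torus generators minus_diff_eq
    by (simp add: Span_diff_in_Sigma std_times_x0_triangular x3_times_std_triangular
        std_times_x1_triangular x4_times_std_triangular_b_pos
        x4_times_std_triangular_a_pos_b_nonpos x4_times_std_triangular_nonpos)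
qed

end
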